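(* For every $m \in \mathbb{N}$ and every $c \geq 0$, the eigenvalues of the $2m\times 2m$ matrix $\tilde{H}_c(m) = \begin{bmatrix} \tilde{A} + 2cI & \tilde{B} \\ \tilde{B}^* & \hat{A} - 2cI \end{bmatrix}$ come in plus/minus pairs (including multiplicity) and $(-2|c - 1|,2|c - 1|) \cap \sigma(\tilde{H}_c(m)) =\emptyset$. Moreover $(-2|c - 1|,2|c - 1|)$ is the largest interval around zero with this property, i.e. it is the stable spectral gap of $\tilde{H}_c$: in particular it contains no spurious eigenvalues whatsoever.
   Context: Here $\tilde A,\tilde B,\hat A$ are real $m\times m$ tridiagonal matrices: $\tilde A$ has all super- and subdiagonal entries $1$ and diagonal $(1,0,\dots,0,-1)$; $\tilde B$ has superdiagonal entries $1$, subdiagonal entries $-1$ and diagonal $(1,0,\dots,0,1)$; $\hat A$ has all super- and subdiagonal entries $-1$ and diagonal $(1,0,\dots,0,-1)$. Equivalently, $\tilde H_c = U\tilde K_c U$ with $U=\frac{1}{\sqrt2}\begin{bmatrix} I & I\\ I & -I\end{bmatrix}$ and $\tilde K_c = 2\begin{bmatrix} e_me_m^T & T_c\\ T_c^* & -e_1e_1^T\end{bmatrix}$, where $T_c$ is the $m\times m$ lower bidiagonal matrix with diagonal entries $c$ and subdiagonal entries $1$, and $e_1,\dots,e_m$ is the canonical basis. $\tilde H_c$ is a low-rank boundary modification of $H_c(2m)=\begin{bmatrix} A+2cI & B\\ -B & -A-2cI\end{bmatrix}$, where $A$ is tridiagonal with zero diagonal and ones off the diagonal and $B$ is tridiagonal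 with zero diagonal, superdiagonal $1$ and subdiagonal $-1$. An interval around zero is called a stable spectral gap if it is disjoint from $\sigma(\tilde H_c(m))$ for all $m$ and is the largest such interval. *)

theory Defs
  imports "Jordan_Normal_Form.Char_Poly"
begin

text \<open>The m x m tridiagonal blocks. Diagonal corrections at the first and last
index are added (so for m = 1 both corrections apply to the single entry).\<close>

definition At :: "nat \<Rightarrow> real mat" where
  "At m = mat m m (\<lambda>(i,j).
     (if j = i + 1 \<or> i = j + 1 then 1 else 0)
   + (if i = j \<and> i = 0 then 1 else 0)
   + (if i = j \<and> i = m - 1 then -1 else 0))"

definition Bt :: "nat \<Rightarrow> real mat" where
  "Bt m = mat m m (\<lambda>(i,j).
     (if j = i + 1 then 1 else 0)
   + (if i = j + 1 then -1 else 0)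
   + (if i = j \<and> i = 0 then 1 else 0)
   + (if i = j \<and> i = m - 1 then 1 else 0))"

definition Ah :: "nat \<Rightarrow> real mat" where
  "Ah m = mat m m (\<lambda>(i,j).
     (if j = i + 1 \<or> i = j + 1 then -1 else 0)
   + (if i = j \<and> i = 0 then 1 else 0)
   + (if i = j \<and> i = m - 1 then -1 else 0))"

text \<open>The 2m x 2m matrix H~_c(m) = [[A~ + 2cI, B~],[B~^*, A^ - 2cI]] (real, so B~^* = B~^T).\<close>

definition Ht :: "real \<Rightarrow> nat \<Rightarrow> real mat" where
  "Ht c m = four_block_mat
     (At m + (2 * c) \<cdot>\<^sub>m 1\<^sub>m m) (Bt m)
     (transpose_mat (Bt m)) (Ah m - (2 * c) \<cdot>\<^sub>m 1\<^sub>m m)"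

text \<open>Spectrum (real points; H~_c(m) is real symmetric).\<close>

definition spec :: "real mat \<Rightarrow> real set" where
  "spec H = {x. eigenvalue H x}"

end

theory Submission
  imports Defs
begin

text \<open>
  All four blocks of H~_c(m) are tridiagonal, and their action on a vector equals the action of
  the infinite tridiagonal operator on the vector extended by one reflected value at each end.
  Conjugating by the block matrix [[0, J], [-J, 0]], with J the reversal permutation, turns
  H~_c(m) into its negative, so the characteristic polynomial is even up to sign and the roots
  come in pairs z, -z of equal multiplicity.
  For the gap, the sums P = x + y and Q = x - y of the two halves of an eigenvector satisfy
  (l/2) P_i = c Q_i + Q_(i-1) and (l/2) Q_i = c P_i + P_(i+1) with reflecting boundary values
  (this is the bidiagonal form T_c); summing squares and using
  (c u + w)^2 >= (c^2 - c) u^2 + (1 - c) w^2 for c >= 0 gives (c - 1)^2 <= (l/2)^2.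
  Sharpness: x_i = cos((i + 1/2) t), y_i proportional to sin((i + 1/2) t) is an eigenvector
  whenever cos(m t) = 0; for t = pi - pi/(2m) the eigenvalues
  +-2 sqrt((cos t + c)^2 + sin t^2) tend to +-2|c - 1|.
\<close>

text \<open>
  The corner corrections make \<open>tridiag_mat n d p q \<sigma> \<tau>\<close> act like the infinite tridiagonal
  operator on \<open>ext_vec \<sigma> \<tau> x\<close>, the extension of \<open>x\<close> by \<open>x\<^sub>-\<^sub>1 = \<sigma> x\<^sub>0\<close> and
  \<open>x\<^sub>n = \<tau> x\<^sub>n\<^sub>-\<^sub>1\<close> (see \<open>tridiag_mat_mult_vec\<close>).
\<close>

definition tridiag_mat :: "nat \<Rightarrow> 'a \<Rightarrow> 'a \<Rightarrow> 'a \<Rightarrow> 'a \<Rightarrow> 'a \<Rightarrow> 'a::comm_ring_1 mat" where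
  "tridiag_mat n d p q \<sigma> \<tau> = mat n n (\<lambda>(i,j).
     (if i = j then d else 0) + (if j = i + 1 then p else 0) + (if i = j + 1 then q else 0)
   + (if i = j \<and> i = 0 then q * \<sigma> else 0) + (if i = j \<and> i = n - 1 then p * \<tau> else 0))"

definition ext_vec :: "'a \<Rightarrow> 'a \<Rightarrow> 'a::comm_ring_1 vec \<Rightarrow> int \<Rightarrow> 'a" where
  "ext_vec \<sigma> \<tau> x k =
     (if k < 0 then \<sigma> * x $ 0
      else if k \<ge> int (dim_vec x) then \<tau> * x $ (dim_vec x - 1) else x $ nat k)"

lemma tridiag_mat_carrier [simp]: "tridiag_mat n d p q \<sigma> \<tau> \<in> carrier_mat n n"
  and dim_row_tridiag_mat [simp]: "dim_row (tridiag_mat n d p q \<sigma> \<tau>) = n"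
  and dim_col_tridiag_mat [simp]: "dim_col (tridiag_mat n d p q \<sigma> \<tau>) = n"
  by (simp_all add: tridiag_mat_def)

lemma ext_vec_nat: "i < dim_vec x \<Longrightarrow> ext_vec \<sigma> \<tau> x (int i) = x $ i"
  by (simp add: ext_vec_def)

lemma ext_vec_vec:
  assumes "m \<ge> 1" "f (-1) = \<sigma> * f 0" "f (int m) = \<tau> * f (int m - 1)" "-1 \<le> k" "k \<le> int m"
  shows "ext_vec \<sigma> \<tau> (vec m (\<lambda>i. f (int i))) k = f k"
proof -
  consider "k = -1" | "k = int m" | "0 \<le> k" "k < int m" using assms(4,5) by linarith
  then show ?thesis
    by cases (use assms(1-3) in \<open>auto simp: ext_vec_def of_nat_diff\<close>)
qed

lemma tridiag_mat_mult_vec: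
  assumes x: "x \<in> carrier_vec n" and i: "i < n"
  shows "(tridiag_mat n d p q \<sigma> \<tau> *\<^sub>v x) $ i
       = d * x $ i + p * ext_vec \<sigma> \<tau> x (int i + 1) + q * ext_vec \<sigma> \<tau> x (int i - 1)"
proof -
  have "(tridiag_mat n d p q \<sigma> \<tau> *\<^sub>v x) $ i = (\<Sum>j<n. tridiag_mat n d p q \<sigma> \<tau> $$ (i,j) * x $ j)"
    using x i by (auto simp: scalar_prod_def lessThan_atLeast0 intro!: sum.cong)
  also have "\<dots> = (\<Sum>j<n. if j = i then
          (d + (if i = 0 then q * \<sigma> else 0) + (if i = n - 1 then p * \<tau> else 0)) * x $ j else 0)
      + (\<Sum>j<n. if j = i + 1 then p * x $ j else 0)
      + (\<Sum>j<n. if j = i - 1 \<and> 0 < i then q * x $ j else 0)"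
    using i unfolding sum.distrib[symmetric]
    by (intro sum.cong refl) (auto simp: tridiag_mat_def algebra_simps)
  also have "\<dots> = d * x $ i + p * ext_vec \<sigma> \<tau> x (int i + 1) + q * ext_vec \<sigma> \<tau> x (int i - 1)"
    using x i by (auto simp: ext_vec_def nat_diff_distrib' nat_add_distrib algebra_simps)
  finally show ?thesis .
qed

lemma uminus_tridiag_mat: "- tridiag_mat n d p q \<sigma> \<tau> = tridiag_mat n (-d) (-p) (-q) \<sigma> \<tau>"
  by (rule eq_matI) (auto simp: tridiag_mat_def)

definition rev_mat :: "nat \<Rightarrow> 'a::semiring_1 mat" where
  "rev_mat n = mat n n (\<lambda>(i,j). if i + j = n - 1 then 1 else 0)"

lemma rev_mat_carrier [simp]: "rev_mat n \<in> carrier_mat n n"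
  and dim_row_rev_mat [simp]: "dim_row (rev_mat n) = n"
  and dim_col_rev_mat [simp]: "dim_col (rev_mat n) = n"
  by (simp_all add: rev_mat_def)

lemma rev_mat_mult:
  assumes "A \<in> carrier_mat n nc"
  shows "rev_mat n * A = mat n nc (\<lambda>(i,j). A $$ (n - 1 - i, j))"
proof (rule eq_matI)
  fix i j assume "i < dim_row (mat n nc (\<lambda>(i,j). A $$ (n - 1 - i, j)))"
    "j < dim_col (mat n nc (\<lambda>(i,j). A $$ (n - 1 - i, j)))"
  then have ij: "i < n" "j < nc" by auto
  have "(rev_mat n * A) $$ (i,j) = (\<Sum>k\<in>{0..<n}. (if i + k = n - 1 then 1 else 0) * A $$ (k,j))"
    using assms ij by (simp add: rev_mat_def scalar_prod_def)
  also have "\<dots> = (\<Sum>k\<in>{0..<n}. if k = n - 1 - i then A $$ (k,j) else 0)"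
    using ij by (intro sum.cong) auto
  finally show "(rev_mat n * A) $$ (i,j) = mat n nc (\<lambda>(i,j). A $$ (n - 1 - i, j)) $$ (i,j)"
    using ij by simp
qed (use assms in auto)

lemma mult_rev_mat:
  assumes "A \<in> carrier_mat nr n"
  shows "A * rev_mat n = mat nr n (\<lambda>(i,j). A $$ (i, n - 1 - j))"
proof (rule eq_matI)
  fix i j assume "i < dim_row (mat nr n (\<lambda>(i,j). A $$ (i, n - 1 - j)))"
    "j < dim_col (mat nr n (\<lambda>(i,j). A $$ (i, n - 1 - j)))"
  then have ij: "i < nr" "j < n" by auto
  have "(A * rev_mat n) $$ (i,j) = (\<Sum>k\<in>{0..<n}. A $$ (i,k) * (if k + j = n - 1 then 1 else 0))"
    using assms ij by (simp add: rev_mat_def scalar_prod_def)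
  also have "\<dots> = (\<Sum>k\<in>{0..<n}. if k = n - 1 - j then A $$ (i,k) else 0)"
    using ij by (intro sum.cong) auto
  finally show "(A * rev_mat n) $$ (i,j) = mat nr n (\<lambda>(i,j). A $$ (i, n - 1 - j)) $$ (i,j)"
    using ij by simp
qed (use assms in auto)

lemma rev_mat_mult_rev_mat: "rev_mat n * rev_mat n = (1\<^sub>m n :: 'a::semiring_1 mat)"
  unfolding rev_mat_mult[OF rev_mat_carrier] by (rule eq_matI) (auto simp: rev_mat_def)

lemma rev_mat_mult_tridiag_mat:
  "rev_mat n * tridiag_mat n d p q \<sigma> \<tau> = tridiag_mat n d q p \<tau> \<sigma> * rev_mat n"
  unfolding rev_mat_mult[OF tridiag_mat_carrier] mult_rev_mat[OF tridiag_mat_carrier]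
proof (rule eq_matI)
  fix i j assume "i < dim_row (mat n n (\<lambda>(i, j). tridiag_mat n d q p \<tau> \<sigma> $$ (i, n - 1 - j)))"
    "j < dim_col (mat n n (\<lambda>(i, j). tridiag_mat n d q p \<tau> \<sigma> $$ (i, n - 1 - j)))"
  then have ij: "i < n" "j < n" "n - 1 - i < n" "n - 1 - j < n" by auto
  have "(n - 1 - i = j) = (i = n - 1 - j)" "(j = n - 1 - i + 1) = (i = n - 1 - j + 1)"
    "(n - 1 - i = j + 1) = (n - 1 - j = i + 1)"
    "(n - 1 - i = j \<and> n - 1 - i = 0) = (i = n - 1 - j \<and> i = n - 1)"
    "(n - 1 - i = j \<and> n - 1 - i = n - 1) = (i = n - 1 - j \<and> i = 0)"
    using ij by arith+
  then show "mat n n (\<lambda>(i, j). tridiag_mat n d p q \<sigma> \<tau> $$ (n - 1 - i, j)) $$ (i, j)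
    = mat n n (\<lambda>(i, j). tridiag_mat n d q p \<tau> \<sigma> $$ (i, n - 1 - j)) $$ (i, j)"
    unfolding tridiag_mat_def index_mat(1)[OF ij(1,2)] index_mat(1)[OF ij(3,2)] index_mat(1)[OF ij(1,4)]
      prod.case
    by (simp only: ac_simps)
qed auto

lemma uminus_four_block_mat:
  fixes A :: "'a::group_add mat"
  assumes "A \<in> carrier_mat nr1 nc1" "B \<in> carrier_mat nr1 nc2"
    "C \<in> carrier_mat nr2 nc1" "D \<in> carrier_mat nr2 nc2"
  shows "- four_block_mat A B C D = four_block_mat (- A) (- B) (- C) (- D)"
  using assms by (intro eq_matI) auto

lemma smult_append_vec: "a \<cdot>\<^sub>v (x @\<^sub>v y) = (a \<cdot>\<^sub>v x) @\<^sub>v (a \<cdot>\<^sub>v y)"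
  by (auto simp: vec_eq_iff append_vec_def Let_def)

lemma pcompose_power: "(p ^ n) \<circ>\<^sub>p q = (p \<circ>\<^sub>p q) ^ n"
  by (induction n) (simp_all add: pcompose_mult)

lemma order_le_order_pcompose_uminus:
  fixes p :: "'a::idom poly"
  assumes "p \<noteq> 0"
  shows "order (-a) p \<le> order a (p \<circ>\<^sub>p [:0, -1:])"
proof -
  define k where "k = order (-a) p"
  obtain s where s: "p = [:a, 1:] ^ k * s"
    using order_1[of "-a" p] unfolding k_def by (auto elim: dvdE)
  have "[:a, 1:] \<circ>\<^sub>p [:0, -1:] = - [:-a, 1:]"
    by (simp add: pcompose_pCons)
  then have "p \<circ>\<^sub>p [:0, -1:] = (- [:-a, 1:]) ^ k * (s \<circ>\<^sub>p [:0, -1:])"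
    by (subst s) (simp only: pcompose_mult pcompose_power)
  moreover have "[:-a, 1:] ^ k dvd (- [:-a, 1:]) ^ k"
    by (intro dvd_power_same) (simp only: dvd_minus_iff dvd_refl)
  ultimately have "[:-a, 1:] ^ k dvd p \<circ>\<^sub>p [:0, -1:]" by (simp add: dvd_mult2)
  moreover have "p \<circ>\<^sub>p [:0, -1:] \<noteq> 0"
    using assms pcompose_eq_0[of p "[:0, -1:]"] by auto
  ultimately show ?thesis
    unfolding k_def by (simp add: order_divides)
qed

lemma order_pcompose_uminus:
  fixes p :: "'a::idom poly"
  assumes "p \<noteq> 0"
  shows "order a (p \<circ>\<^sub>p [:0, -1:]) = order (-a) p"
proof (rule antisym)
  let ?q = "p \<circ>\<^sub>p [:0, -1:]"
  have "?q \<noteq> 0" using assms pcompose_eq_0[of p "[:0, -1:]"] by auto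
  moreover have "?q \<circ>\<^sub>p [:0, -1:] = p"
    by (simp add: pcompose_assoc[symmetric] pcompose_pCons)
  ultimately show "order a ?q \<le> order (-a) p"
    using order_le_order_pcompose_uminus[of ?q "-a"] by simp
qed (rule order_le_order_pcompose_uminus[OF assms])

lemma char_poly_uminus:
  fixes A :: "'a::field_char_0 mat"
  assumes A: "A \<in> carrier_mat n n"
  shows "char_poly (- A) = Polynomial.smult ((-1) ^ n) (char_poly A \<circ>\<^sub>p [:0, -1:])"
proof (rule poly_eq_poly_eq_iff[THEN iffD1, OF ext])
  fix k
  have "- char_matrix (- A) k = (-1) \<cdot>\<^sub>m (- char_matrix A (-k))"
    using A by (intro eq_matI) (auto simp: char_matrix_def)
  then have "det (- char_matrix (- A) k) = (-1) ^ n * det (- char_matrix A (-k))"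
    using A by (simp add: det_smult char_matrix_def)
  then show "poly (char_poly (- A)) k = poly (Polynomial.smult ((-1) ^ n) (char_poly A \<circ>\<^sub>p [:0, -1:])) k"
    using A by (simp add: char_poly_matrix poly_pcompose)
qed

lemma order_char_poly_uminus_eq:
  fixes A :: "'a::field_char_0 mat"
  assumes A: "A \<in> carrier_mat n n" and sym: "char_poly (- A) = char_poly A"
  shows "order (-z) (char_poly A) = order z (char_poly A)"
proof -
  have "char_poly A \<noteq> 0" using degree_monic_char_poly[OF A] by auto
  moreover have "(-1 :: 'a) ^ n \<noteq> 0" by simp
  then have "order z (char_poly A) = order z (char_poly A \<circ>\<^sub>p [:0, -1:])"
    using order_smult[of "(-1) ^ n" z] char_poly_uminus[OF A] sym by metis
  ultimately show ?thesis by (simp add: order_pcompose_uminus)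
qed

lemma sum_shift_reflected:
  fixes P Q :: "int \<Rightarrow> real"
  assumes "m \<ge> 1" "Q (-1) = P 0" "P (int m) = - Q (int m - 1)"
  shows "(\<Sum>i<m. Q (int i - 1)^2 + P (int i + 1)^2) = (\<Sum>i<m. P (int i)^2 + Q (int i)^2)"
proof -
  obtain n where m: "m = Suc n" using assms(1) by (cases m) auto
  have "(\<Sum>i<m. Q (int i - 1)^2) = P 0 ^ 2 + (\<Sum>i<n. Q (int i)^2)"
    unfolding m sum.lessThan_Suc_shift using assms(2) by simp
  moreover have "(\<Sum>i<m. P (int i + 1)^2) = (\<Sum>i<n. P (int (Suc i))^2) + Q (int n)^2"
    unfolding m sum.lessThan_Suc using assms(3) m by (simp add: add.commute)
  moreover have "(\<Sum>i<m. P (int i)^2) = P 0 ^ 2 + (\<Sum>i<n. P (int (Suc i))^2)"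
    unfolding m sum.lessThan_Suc_shift by simp
  moreover have "(\<Sum>i<m. Q (int i)^2) = (\<Sum>i<n. Q (int i)^2) + Q (int n)^2"
    unfolding m sum.lessThan_Suc by simp
  ultimately show ?thesis by (simp add: sum.distrib)
qed

lemma reflected_system_bound:
  fixes P Q :: "int \<Rightarrow> real" and c \<mu> :: real
  assumes c: "c \<ge> 0"
    and eqP: "\<And>i. i < m \<Longrightarrow> \<mu> * P (int i) = c * Q (int i) + Q (int i - 1)"
    and eqQ: "\<And>i. i < m \<Longrightarrow> \<mu> * Q (int i) = c * P (int i) + P (int i + 1)"
    and left: "Q (-1) = P 0" and right: "P (int m) = - Q (int m - 1)"
    and nonzero: "i < m" "P (int i) \<noteq> 0 \<or> Q (int i) \<noteq> 0"
  shows "(c - 1)^2 \<le> \<mu>^2"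
proof -
  define S where "S = (\<Sum>i<m. P (int i)^2 + Q (int i)^2)"
  \<comment> \<open>the difference of the two sides is \<open>c (u + w)\<^sup>2\<close>\<close>
  have weighted: "(c^2 - c) * u^2 + (1 - c) * w^2 \<le> (c * u + w)^2" for u w :: real
    using mult_nonneg_nonneg[OF c zero_le_power2[of "u + w"]]
    by (simp add: power2_eq_square algebra_simps)
  have "m \<ge> 1" using nonzero(1) by simp
  then have "(c^2 - c) * S + (1 - c) * S
      = (c^2 - c) * S + (1 - c) * (\<Sum>i<m. Q (int i - 1)^2 + P (int i + 1)^2)"
    unfolding S_def by (simp only: sum_shift_reflected[OF _ left right])
  also have "\<dots> = (\<Sum>i<m. ((c^2 - c) * Q (int i)^2 + (1 - c) * Q (int i - 1)^2)
      + ((c^2 - c) * P (int i)^2 + (1 - c) * P (int i + 1)^2))"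
    unfolding S_def sum_distrib_left sum.distrib[symmetric] by (intro sum.cong refl) (simp add: algebra_simps)
  also have "\<dots> \<le> (\<Sum>i<m. (c * Q (int i) + Q (int i - 1))^2 + (c * P (int i) + P (int i + 1))^2)"
    by (intro sum_mono add_mono weighted)
  also have "\<dots> = \<mu>^2 * S"
    unfolding S_def sum_distrib_left using eqP eqQ
    by (intro sum.cong refl) (simp add: power_mult_distrib[symmetric] algebra_simps)
  finally have "(c - 1)^2 * S \<le> \<mu>^2 * S"
    by (simp add: power2_eq_square algebra_simps)
  moreover have "S > 0"
    unfolding S_def using nonzero
    by (intro sum_pos2[of _ i]) (auto simp: add_pos_nonneg add_nonneg_pos)
  ultimately show ?thesis by simp
qed

lemma Ht_tridiag:
  "Ht c m = four_block_mat
     (tridiag_mat m (2*c) 1 1 1 (-1)) (tridiag_mat m 0 1 (-1) (-1) 1)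
     (tridiag_mat m 0 (-1) 1 1 (-1)) (tridiag_mat m (-2*c) (-1) (-1) (-1) 1)"
proof -
  have "At m + (2*c) \<cdot>\<^sub>m 1\<^sub>m m = tridiag_mat m (2*c) 1 1 1 (-1)"
    "Bt m = tridiag_mat m 0 1 (-1) (-1) 1"
    "transpose_mat (Bt m) = tridiag_mat m 0 (-1) 1 1 (-1)"
    "Ah m - (2*c) \<cdot>\<^sub>m 1\<^sub>m m = tridiag_mat m (-2*c) (-1) (-1) (-1) 1"
    by (rule eq_matI; auto simp: At_def Bt_def Ah_def tridiag_mat_def)+
  then show ?thesis by (simp add: Ht_def)
qed

lemma Ht_carrier: "Ht c m \<in> carrier_mat (m + m) (m + m)"
  by (simp add: Ht_tridiag)

lemma Ht_eigen_equations:
  fixes x y :: "real vec"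
  assumes x: "x \<in> carrier_vec m" and y: "y \<in> carrier_vec m"
  defines "X \<equiv> ext_vec 1 (-1) x" and "Y \<equiv> ext_vec (-1) 1 y"
  shows "Ht c m *\<^sub>v (x @\<^sub>v y) = l \<cdot>\<^sub>v (x @\<^sub>v y) \<longleftrightarrow>
    (\<forall>i<m. 2*c * x $ i + X (int i + 1) + X (int i - 1) + Y (int i + 1) - Y (int i - 1) = l * x $ i) \<and>
    (\<forall>i<m. X (int i - 1) - X (int i + 1) - 2*c * y $ i - Y (int i + 1) - Y (int i - 1) = l * y $ i)"
    (is "_ \<longleftrightarrow> ?R")
proof -
  let ?A = "tridiag_mat m (2*c) 1 1 1 (-1)" and ?B = "tridiag_mat m 0 1 (-1) (-1) 1"
  let ?C = "tridiag_mat m 0 (-1) 1 1 (-1)" and ?D = "tridiag_mat m (-2*c) (-1) (-1) (-1) 1"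
  have "Ht c m *\<^sub>v (x @\<^sub>v y) = (?A *\<^sub>v x + ?B *\<^sub>v y) @\<^sub>v (?C *\<^sub>v x + ?D *\<^sub>v y)"
    unfolding Ht_tridiag by (rule four_block_mat_mult_vec) (use x y in auto)
  then have "Ht c m *\<^sub>v (x @\<^sub>v y) = l \<cdot>\<^sub>v (x @\<^sub>v y) \<longleftrightarrow>
      (?A *\<^sub>v x + ?B *\<^sub>v y) @\<^sub>v (?C *\<^sub>v x + ?D *\<^sub>v y) = (l \<cdot>\<^sub>v x) @\<^sub>v (l \<cdot>\<^sub>v y)"
    by (simp add: smult_append_vec)
  also have "\<dots> \<longleftrightarrow> ?A *\<^sub>v x + ?B *\<^sub>v y = l \<cdot>\<^sub>v x \<and> ?C *\<^sub>v x + ?D *\<^sub>v y = l \<cdot>\<^sub>v y"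
    by (rule append_vec_eq) (auto intro!: add_carrier_vec mult_mat_vec_carrier[OF tridiag_mat_carrier] x y)
  also have "\<dots> \<longleftrightarrow> ?R"
    using x y by (simp add: vec_eq_iff tridiag_mat_mult_vec X_def Y_def algebra_simps
        del: index_mult_mat_vec)
  finally show ?thesis .
qed

definition Ht_flip :: "nat \<Rightarrow> real mat" where
  "Ht_flip m = four_block_mat (0\<^sub>m m m) (rev_mat m) (- rev_mat m) (0\<^sub>m m m)"

lemma Ht_flip_carrier: "Ht_flip m \<in> carrier_mat (m + m) (m + m)"
  by (simp add: Ht_flip_def)

lemma Ht_flip_anticommute: "Ht_flip m * Ht c m = - (Ht c m * Ht_flip m)"
proof -
  define J :: "real mat" where "J = rev_mat m"
  define A :: "real mat" where "A = tridiag_mat m (2*c) 1 1 1 (-1)"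
  define B :: "real mat" where "B = tridiag_mat m 0 1 (-1) (-1) 1"
  define C :: "real mat" where "C = tridiag_mat m 0 (-1) 1 1 (-1)"
  define D :: "real mat" where "D = tridiag_mat m (-2*c) (-1) (-1) (-1) 1"
  have carr: "J \<in> carrier_mat m m" "A \<in> carrier_mat m m" "B \<in> carrier_mat m m"
    "C \<in> carrier_mat m m" "D \<in> carrier_mat m m"
    by (simp_all add: J_def A_def B_def C_def D_def)
  have H: "Ht c m = four_block_mat A B C D"
    by (simp add: Ht_tridiag A_def B_def C_def D_def)
  have mJ: "- J \<in> carrier_mat m m" using carr by simp
  have z: "0\<^sub>m m m \<in> carrier_mat m m" by simp
  have "Ht_flip m * Ht c m = four_block_mat (J * C) (J * D) (- (J * A)) (- (J * B))"
    unfolding Ht_flip_def H J_def[symmetric] mult_four_block_mat[OF z carr(1) mJ z carr(2-5)]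
    using carr by simp
  also have "\<dots> = four_block_mat (B * J) (- (A * J)) (D * J) (- (C * J))"
    unfolding J_def A_def B_def C_def D_def
    by (simp del: uminus_mult_left_mat
        add: rev_mat_mult_tridiag_mat uminus_mult_left_mat[symmetric] uminus_tridiag_mat)
  also have "\<dots> = - (Ht c m * Ht_flip m)"
    unfolding Ht_flip_def H J_def[symmetric] mult_four_block_mat[OF carr(2-5) z carr(1) mJ z]
    using carr by (simp add: uminus_four_block_mat[of _ m m _ m _ m])
  finally show ?thesis .
qed

lemma Ht_flip_square: "Ht_flip m * Ht_flip m = - 1\<^sub>m (m + m)"
proof -
  have J: "rev_mat m \<in> carrier_mat m m" "- rev_mat m \<in> carrier_mat m m" by simp_all
  have z: "0\<^sub>m m m \<in> carrier_mat m m" by simp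
  have "- 1\<^sub>m (m + m) = four_block_mat (- 1\<^sub>m m) (0\<^sub>m m m) (0\<^sub>m m m) (- 1\<^sub>m m :: real mat)"
    by (rule eq_matI) auto
  then show ?thesis
    unfolding Ht_flip_def mult_four_block_mat[OF z J(1) J(2) z z J(1) J(2) z]
    by (simp add: rev_mat_mult_rev_mat) (rule eq_matI; simp)
qed

lemma similar_mat_uminus_Ht: "similar_mat (- Ht c m) (Ht c m)"
proof (rule similar_matI)
  let ?S = "Ht_flip m" and ?H = "Ht c m"
  have S: "?S \<in> carrier_mat (m + m) (m + m)" and H: "?H \<in> carrier_mat (m + m) (m + m)"
    by (rule Ht_flip_carrier Ht_carrier)+
  show "?S * - ?S = 1\<^sub>m (m + m)" "- ?S * ?S = 1\<^sub>m (m + m)"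
    using S by (simp_all add: Ht_flip_square)
  have "?S * ?H * - ?S = ?H * (?S * ?S)"
    using S H by (simp add: Ht_flip_anticommute)
  then show "- ?H = ?S * ?H * - ?S"
    using H by (simp add: Ht_flip_square)
  show "{- ?H, ?H, ?S, - ?S} \<subseteq> carrier_mat (m + m) (m + m)"
    using S H by simp
qed

lemma order_char_poly_Ht_uminus:
  "order (-z) (char_poly (map_mat complex_of_real (Ht c m)))
 = order z (char_poly (map_mat complex_of_real (Ht c m)))"
proof (rule order_char_poly_uminus_eq)
  let ?H = "Ht c m"
  show "map_mat complex_of_real ?H \<in> carrier_mat (m + m) (m + m)"
    using Ht_carrier by simp
  have "map_mat complex_of_real (- ?H) = - map_mat complex_of_real ?H"
    using Ht_carrier[of c m] by (intro eq_matI) auto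
  moreover have "char_poly (map_mat complex_of_real (- ?H)) = char_poly (map_mat complex_of_real ?H)"
    using Ht_carrier[of c m]
    by (simp add: of_real_hom.char_poly_hom char_poly_similar[OF similar_mat_uminus_Ht])
  ultimately show "char_poly (- map_mat complex_of_real ?H) = char_poly (map_mat complex_of_real ?H)"
    by simp
qed

lemma Ht_eigenvalue_gap:
  fixes c l :: real
  assumes c: "c \<ge> 0" and ev: "eigenvalue (Ht c m) l"
  shows "2 * \<bar>c - 1\<bar> \<le> \<bar>l\<bar>"
proof -
  obtain v where v: "v \<in> carrier_vec (m + m)" "v \<noteq> 0\<^sub>v (m + m)" "Ht c m *\<^sub>v v = l \<cdot>\<^sub>v v"
    using ev Ht_carrier[of c m] unfolding eigenvalue_def eigenvector_def by auto
  define x where "x = vec_first v m"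
  define y where "y = vec_last v m"
  have x: "x \<in> carrier_vec m" and y: "y \<in> carrier_vec m" by (simp_all add: x_def y_def)
  have v_split: "v = x @\<^sub>v y" using v(1) by (simp add: x_def y_def)
  define X where "X = ext_vec 1 (-1) x"
  define Y where "Y = ext_vec (-1) 1 y"
  define P where "P k = X k + Y k" for k
  define Q where "Q k = X k - Y k" for k
  have eqs: "2*c * x $ i + X (int i + 1) + X (int i - 1) + Y (int i + 1) - Y (int i - 1) = l * x $ i"
    "X (int i - 1) - X (int i + 1) - 2*c * y $ i - Y (int i + 1) - Y (int i - 1) = l * y $ i"
    if "i < m" for i
    using v(3) that unfolding v_split Ht_eigen_equations[OF x y] X_def Y_def by auto
  have at_i: "X (int i) = x $ i" "Y (int i) = y $ i" if "i < m" for i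
    using that x y by (simp_all add: X_def Y_def ext_vec_nat)
  have "\<exists>i<m. x $ i \<noteq> 0 \<or> y $ i \<noteq> 0"
  proof (rule ccontr)
    assume "\<not> ?thesis"
    then have "x @\<^sub>v y = 0\<^sub>v (m + m)" using x y by (auto simp: vec_eq_iff)
    then show False using v(2) v_split by simp
  qed
  then obtain i where i: "i < m" "x $ i \<noteq> 0 \<or> y $ i \<noteq> 0" by blast
  have "(c - 1)^2 \<le> (l / 2)^2"
  proof (rule reflected_system_bound[OF c])
    show "l / 2 * P (int j) = c * Q (int j) + Q (int j - 1)"
      "l / 2 * Q (int j) = c * P (int j) + P (int j + 1)" if "j < m" for j
      using eqs[OF that] at_i[OF that] by (simp_all add: P_def Q_def field_simps)
    show "Q (-1) = P 0" "P (int m) = - Q (int m - 1)"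
      using i(1) x y by (simp_all add: P_def Q_def X_def Y_def ext_vec_def nat_diff_distrib')
    show "i < m" "P (int i) \<noteq> 0 \<or> Q (int i) \<noteq> 0"
      using i at_i[OF i(1)] by (auto simp: P_def Q_def)
  qed
  then have "\<bar>c - 1\<bar> \<le> \<bar>l / 2\<bar>" using abs_le_square_iff by blast
  then show ?thesis by simp
qed

lemma exists_ratio_of_sum_squares:
  fixes \<alpha> \<beta> l :: real
  assumes "\<beta> \<noteq> 0" "l^2 = \<alpha>^2 + \<beta>^2"
  obtains t where "\<alpha> + t * \<beta> = l" "\<beta> - t * \<alpha> = l * t"
proof
  show "\<alpha> + (l - \<alpha>) / \<beta> * \<beta> = l" using assms(1) by simp
  have "(l - \<alpha>) * (l + \<alpha>) = \<beta> * \<beta>" using assms(2) by (simp add: power2_eq_square algebra_simps)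
  then show "\<beta> - (l - \<alpha>) / \<beta> * \<alpha> = l * ((l - \<alpha>) / \<beta>)"
    using assms(1) by (simp add: field_simps)
qed

lemma Ht_mult_trig_vec:
  fixes \<theta> c l t :: real
  assumes m: "m \<ge> 1" and cos_m: "cos (real m * \<theta>) = 0"
    and top: "2 * (cos \<theta> + c) + t * (2 * sin \<theta>) = l"
    and bottom: "2 * sin \<theta> - t * (2 * (cos \<theta> + c)) = l * t"
  defines "x \<equiv> vec m (\<lambda>i. cos ((real i + 1/2) * \<theta>))"
    and "y \<equiv> vec m (\<lambda>i. t * sin ((real i + 1/2) * \<theta>))"
  shows "Ht c m *\<^sub>v (x @\<^sub>v y) = l \<cdot>\<^sub>v (x @\<^sub>v y)"
proof -
  define u where "u k = (real_of_int k + 1/2) * \<theta>" for k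
  define f where "f k = cos (u k)" for k
  define g where "g k = t * sin (u k)" for k
  have u_shift: "u (1 + k) = u k + \<theta>" "u (k - 1) = u k - \<theta>" for k
    by (simp_all add: u_def algebra_simps)
  have u_ends: "u (-1) = - u 0" "u (int m) = real m * \<theta> + \<theta> / 2" "u (int m - 1) = real m * \<theta> - \<theta> / 2"
    by (simp_all add: u_def algebra_simps)
  have x_f: "x = vec m (\<lambda>i. f (int i))" and y_g: "y = vec m (\<lambda>i. g (int i))"
    by (simp_all add: x_def y_def f_def g_def u_def)
  have x: "x \<in> carrier_vec m" and y: "y \<in> carrier_vec m" by (simp_all add: x_def y_def)
  have X: "ext_vec 1 (-1) x k = f k" if "-1 \<le> k" "k \<le> int m" for k
    unfolding x_f using m that
    by (intro ext_vec_vec) (simp_all add: f_def u_ends cos_add cos_diff cos_m)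
  have Y: "ext_vec (-1) 1 y k = g k" if "-1 \<le> k" "k \<le> int m" for k
    unfolding y_g using m that
    by (intro ext_vec_vec) (simp_all add: g_def u_ends sin_add sin_diff cos_m)
  show ?thesis
  proof (subst Ht_eigen_equations[OF x y], intro conjI allI impI)
    fix i assume i: "i < m"
    have xi: "x $ i = f (int i)" and yi: "y $ i = g (int i)" using i by (simp_all add: x_f y_g)
    have XY: "ext_vec 1 (-1) x (int i + 1) = f (int i + 1)" "ext_vec 1 (-1) x (int i - 1) = f (int i - 1)"
      "ext_vec (-1) 1 y (int i + 1) = g (int i + 1)" "ext_vec (-1) 1 y (int i - 1) = g (int i - 1)"
      using i by (simp_all add: X Y)
    show "2*c * x $ i + ext_vec 1 (-1) x (int i + 1) + ext_vec 1 (-1) x (int i - 1)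
        + ext_vec (-1) 1 y (int i + 1) - ext_vec (-1) 1 y (int i - 1) = l * x $ i"
      unfolding xi XY top[symmetric]
      by (simp add: f_def g_def u_shift cos_add cos_diff sin_add sin_diff algebra_simps)
    have "ext_vec 1 (-1) x (int i - 1) - ext_vec 1 (-1) x (int i + 1) - 2*c * y $ i
        - ext_vec (-1) 1 y (int i + 1) - ext_vec (-1) 1 y (int i - 1)
        = l * t * sin (u (int i))"
      unfolding yi XY bottom[symmetric]
      by (simp add: f_def g_def u_shift cos_add cos_diff sin_add sin_diff algebra_simps)
    then show "ext_vec 1 (-1) x (int i - 1) - ext_vec 1 (-1) x (int i + 1) - 2*c * y $ i
        - ext_vec (-1) 1 y (int i + 1) - ext_vec (-1) 1 y (int i - 1) = l * y $ i"
      by (simp add: yi g_def)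
  qed
qed

lemma Ht_eigenvalue_of_angle:
  fixes \<theta> c l :: real
  assumes m: "m \<ge> 1" and cos_m: "cos (real m * \<theta>) = 0" and sin: "sin \<theta> \<noteq> 0"
    and cos_half: "cos (\<theta> / 2) \<noteq> 0"
    and l: "l^2 = (2 * (cos \<theta> + c))^2 + (2 * sin \<theta>)^2"
  shows "eigenvalue (Ht c m) l"
proof -
  obtain t where top: "2 * (cos \<theta> + c) + t * (2 * sin \<theta>) = l"
    and bottom: "2 * sin \<theta> - t * (2 * (cos \<theta> + c)) = l * t"
    using sin l by (auto intro: exists_ratio_of_sum_squares[of "2 * sin \<theta>"])
  define x where "x = vec m (\<lambda>i. cos ((real i + 1/2) * \<theta>))"
  define y where "y = vec m (\<lambda>i. t * sin ((real i + 1/2) * \<theta>))"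
  have "(x @\<^sub>v y) $ 0 = cos (\<theta> / 2)" using m by (simp add: x_def y_def)
  then have "x @\<^sub>v y \<noteq> 0\<^sub>v (m + m)" using m cos_half by auto
  moreover have "Ht c m *\<^sub>v (x @\<^sub>v y) = l \<cdot>\<^sub>v (x @\<^sub>v y)"
    unfolding x_def y_def by (rule Ht_mult_trig_vec[OF m cos_m top bottom])
  ultimately show ?thesis
    unfolding eigenvalue_def eigenvector_def
    by (intro exI[of _ "x @\<^sub>v y"]) (simp add: Ht_tridiag x_def y_def)
qed

definition edge_angle :: "nat \<Rightarrow> real" where
  "edge_angle m = pi - pi / (2 * real m)"

definition edge_eigenvalue :: "real \<Rightarrow> nat \<Rightarrow> real" where
  "edge_eigenvalue c m = sqrt ((2 * (cos (edge_angle m) + c))^2 + (2 * sin (edge_angle m))^2)"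

lemma Ht_edge_eigenvalues:
  assumes m: "m \<ge> 1"
  shows "eigenvalue (Ht c m) (edge_eigenvalue c m)" "eigenvalue (Ht c m) (- edge_eigenvalue c m)"
    "edge_eigenvalue c m > 0"
proof -
  define \<delta> where "\<delta> = pi / (2 * real m)"
  have \<delta>: "0 < \<delta>" "\<delta> \<le> pi / 2" using m by (auto simp: \<delta>_def field_simps)
  have angle: "edge_angle m = pi - \<delta>" by (simp add: edge_angle_def \<delta>_def)
  have "real m * edge_angle m = real m * pi - pi / 2" using m by (simp add: edge_angle_def field_simps)
  then have cos_m: "cos (real m * edge_angle m) = 0" by (simp add: cos_diff sin_npi)
  have "sin \<delta> > 0" using \<delta> by (intro sin_gt_zero) auto
  then have sin: "sin (edge_angle m) \<noteq> 0" by (simp add: angle)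
  have "cos (edge_angle m / 2) > 0" using \<delta> by (intro cos_gt_zero_pi) (auto simp: angle)
  then have cos_half: "cos (edge_angle m / 2) \<noteq> 0" by simp
  have pos: "(2 * (cos (edge_angle m) + c))^2 + (2 * sin (edge_angle m))^2 > 0"
    using sin by (simp add: add_nonneg_pos)
  then have sq: "(edge_eigenvalue c m)^2 = (2 * (cos (edge_angle m) + c))^2 + (2 * sin (edge_angle m))^2"
    unfolding edge_eigenvalue_def by simp
  show "eigenvalue (Ht c m) (edge_eigenvalue c m)"
    by (rule Ht_eigenvalue_of_angle[OF m cos_m sin cos_half sq])
  show "eigenvalue (Ht c m) (- edge_eigenvalue c m)"
    by (rule Ht_eigenvalue_of_angle[OF m cos_m sin cos_half]) (simp add: sq)
  show "edge_eigenvalue c m > 0" using pos unfolding edge_eigenvalue_def by simp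
qed

lemma edge_eigenvalue_tendsto: "edge_eigenvalue c \<longlonglongrightarrow> 2 * \<bar>c - 1\<bar>"
proof -
  have "(\<lambda>m. pi / 2 * inverse (real m)) \<longlonglongrightarrow> pi / 2 * 0"
    by (intro tendsto_mult tendsto_const lim_inverse_n)
  then have "edge_angle \<longlonglongrightarrow> pi - 0"
    unfolding edge_angle_def[abs_def] by (intro tendsto_diff tendsto_const) (simp add: field_simps)
  then have "edge_eigenvalue c \<longlonglongrightarrow> sqrt ((2 * (cos (pi - 0) + c))^2 + (2 * sin (pi - 0))^2)"
    unfolding edge_eigenvalue_def[abs_def] by (intro tendsto_intros)
  moreover have "\<bar>2 * c - 2\<bar> = 2 * \<bar>c - 1\<bar>" by (simp add: abs_if)
  then have "sqrt ((2 * (cos (pi - 0) + c))^2 + (2 * sin (pi - 0))^2) = 2 * \<bar>c - 1\<bar>"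
    by (simp add: power_mult_distrib abs_mult)
  ultimately show ?thesis by simp
qed

lemma Ht_eigenvalue_pair_below:
  assumes "2 * \<bar>c - 1\<bar> < b"
  obtains m l where "m \<ge> 1" "0 < l" "l < b" "eigenvalue (Ht c m) l" "eigenvalue (Ht c m) (- l)"
proof -
  obtain N where "\<And>m. m \<ge> N \<Longrightarrow> edge_eigenvalue c m < b"
    using order_tendstoD(2)[OF edge_eigenvalue_tendsto assms] unfolding eventually_sequentially by blast
  then show ?thesis using that[of "Suc N" "edge_eigenvalue c (Suc N)"] Ht_edge_eigenvalues[of "Suc N" c] by simp
qed

theorem theorem5p2:
  fixes c :: real
  assumes "c \<ge> 0"
  shows "(\<forall>m\<ge>1. \<forall>z::complex.
            order (-z) (char_poly (map_mat complex_of_real (Ht c m)))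
          = order z (char_poly (map_mat complex_of_real (Ht c m))))
       \<and> (\<forall>m\<ge>1. {- 2 * \<bar>c - 1\<bar> <..< 2 * \<bar>c - 1\<bar>} \<inter> spec (Ht c m) = {})
       \<and> (\<forall>a b. a < 0 \<and> 0 < b \<and> (\<forall>m\<ge>1. {a<..<b} \<inter> spec (Ht c m) = {})
               \<longrightarrow> {a<..<b} \<subseteq> {- 2 * \<bar>c - 1\<bar> <..< 2 * \<bar>c - 1\<bar>})"
proof (intro conjI allI impI)
  show "order (-z) (char_poly (map_mat complex_of_real (Ht c m)))
      = order z (char_poly (map_mat complex_of_real (Ht c m)))" for m z
    by (rule order_char_poly_Ht_uminus)
  show "{- 2 * \<bar>c - 1\<bar> <..< 2 * \<bar>c - 1\<bar>} \<inter> spec (Ht c m) = {}" for m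
    using Ht_eigenvalue_gap[OF assms] by (force simp: spec_def)
  fix a b :: real
  assume gap: "a < 0 \<and> 0 < b \<and> (\<forall>m\<ge>1. {a<..<b} \<inter> spec (Ht c m) = {})"
  have False if r: "2 * \<bar>c - 1\<bar> < r" "r \<le> b \<or> r \<le> - a" for r
  proof -
    obtain m l where "m \<ge> 1" "0 < l" "l < r" "eigenvalue (Ht c m) l" "eigenvalue (Ht c m) (- l)"
      using r(1) by (rule Ht_eigenvalue_pair_below)
    moreover have "l \<in> {a<..<b} \<or> - l \<in> {a<..<b}"
      using gap r(2) \<open>0 < l\<close> \<open>l < r\<close> by auto
    moreover have "{a<..<b} \<inter> spec (Ht c m) = {}" using gap \<open>m \<ge> 1\<close> by blast
    ultimately show False unfolding spec_def by blast
  qed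
  then have "b \<le> 2 * \<bar>c - 1\<bar>" "- a \<le> 2 * \<bar>c - 1\<bar>" by (meson not_le order_refl)+
  then show "{a<..<b} \<subseteq> {- 2 * \<bar>c - 1\<bar> <..< 2 * \<bar>c - 1\<bar>}" by auto
qed

end
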